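(* Let $\mathcal{B}$ be the Borel $\sigma$-algebra of $[0,1]$ and let $\mathcal{D}=\{f^{-1}(B):B\in\mathcal{B}\}$, where $f\colon[0,1]\to[0,1]$ is constructed as described in the context. Then the $\sigma$-algebra $$\big((\mathcal{D}\vee\mathcal{B})\otimes\mathcal{B}\big)\cap\big((\mathcal{D}\vee\mathcal{B})\otimes\mathcal{D}\big)$$ on $[0,1]^2$ is not of the form $\mathcal{A}_0\otimes\mathcal{E}$ for any $\sigma$-algebras $\mathcal{A}_0,\mathcal{E}$ on $[0,1]$.
   Context: Construction of $f$: let $\omega_{\mathfrak{c}}$ be the first ordinal of cardinality $\mathfrak{c}$ (the continuum), and let $(M_\alpha)_{1\le\alpha<\omega_{\mathfrak{c}}}$ be an enumeration of all uncountable Borel subsets of $[0,1]$ with uncountable complement. By transfinite recursion choose for each $\alpha<\omega_{\mathfrak{c}}$ three distinct points $x_\alpha,y_\alpha\in M_\alpha$, $z_\alpha\in[0,1]\setminus M_\alpha$ with $\{x_\alpha,y_\alpha,z_\alpha\}\cap\bigcup_{\beta<\alpha}\{x_\beta,y_\beta,z_\beta\}=\emptyset$. Define $f$ by $f(x_\alpha)=z_\alpha$, $f(z_\alpha)=x_\alpha$ for every $\alpha$, and $f(t)=t$ for all other $t$ (in particular $f(y_\alpha)=y_\alpha$). For $\sigma$-algebras $\mathcal{F},\mathcal{G}$ on a set, $\mathcal{F}\vee\mathcal{G}$ is the smallest $\sigma$-algebra containing $\mathcal{F}\cup\mathcal{G}$; $\otimes$ denotes the product $\sigma$-algebra (generated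 by measurable rectangles). *)

theory Defs
  imports "HOL-Analysis.Analysis"
begin

definition unit_borel :: "real measure" where
  "unit_borel = restrict_space borel {0..1}"

definition join_unit :: "real measure \<Rightarrow> real measure \<Rightarrow> real measure" where
  "join_unit F G = sigma {0..1} (sets F \<union> sets G)"

definition big_borel_sets :: "real set set" where
  "big_borel_sets = {M. M \<in> sets borel \<and> M \<subseteq> {0..1} \<and> uncountable M \<and> uncountable ({0..1} - M)}"

text \<open>f arises from the construction of the paper: an enumeration M (indexed by I) of
  big_borel_sets and pairwise disjoint triples of distinct points x i, y i in M i,
  z i in [0,1] - M i; f swaps x i and z i and fixes everything else.\<close>
definition constructed_f :: "'i set \<Rightarrow> ('i \<Rightarrow> real set) \<Rightarrow> ('i \<Rightarrow> real) \<Rightarrow> ('i \<Rightarrow> real)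
    \<Rightarrow> ('i \<Rightarrow> real) \<Rightarrow> (real \<Rightarrow> real) \<Rightarrow> bool" where
  "constructed_f I M x y z f \<longleftrightarrow>
     bij_betw M I big_borel_sets \<and>
     (\<forall>i\<in>I. x i \<in> M i \<and> y i \<in> M i \<and> z i \<in> {0..1} - M i \<and>
             x i \<noteq> y i \<and> x i \<noteq> z i \<and> y i \<noteq> z i) \<and>
     (\<forall>i\<in>I. \<forall>j\<in>I. i \<noteq> j \<longrightarrow> {x i, y i, z i} \<inter> {x j, y j, z j} = {}) \<and>
     (\<forall>i\<in>I. f (x i) = z i \<and> f (z i) = x i) \<and>
     (\<forall>t. t \<notin> x ` I \<union> z ` I \<longrightarrow> f t = t)"

end

theory Submission
  imports Defs
begin

(* Let A = D \/ B. Since f is an involution, the diagonal of [0,1]^2 is both {s = t} and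
   {f s = f t}, so it lies in A (x) B and in A (x) D. If the intersection were A0 (x) E, then
   taking sections every set e of E would be both Borel and in D, so f(e) = f^-1(e) is Borel as
   well; e \/ f(e) and e /\ f(e) are then f-invariant Borel sets, which the construction forces
   to be countable or co-countable, and since each of the uncountably many fixed points y_alpha
   lies in both of e, f(e) or in neither, e itself is countable or co-countable. But a set of
   A0 (x) E is determined in its second coordinate by countably many sets of E, and countably many
   countable or co-countable sets cannot separate all points of [0,1], so the diagonal is not in
   A0 (x) E. *)

lemma sets_pair_measure_countably_determined_snd:
  assumes "S \<in> sets (P \<Otimes>\<^sub>M E)"
  obtains K where "countable K" "K \<subseteq> sets E"
    "\<forall>t t'. (\<forall>k\<in>K. t \<in> k \<longleftrightarrow> t' \<in> k) \<longrightarrow> (\<forall>s. (s, t) \<in> S \<longleftrightarrow> (s, t') \<in> S)"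
proof -
  have "\<exists>K. countable K \<and> K \<subseteq> sets E \<and>
    (\<forall>t t'. (\<forall>k\<in>K. t \<in> k \<longleftrightarrow> t' \<in> k) \<longrightarrow> (\<forall>s. (s, t) \<in> S \<longleftrightarrow> (s, t') \<in> S))"
    using assms unfolding sets_pair_measure
  proof (induction rule: sigma_sets.induct)
    case (Basic a)
    then obtain a1 b1 where "a = a1 \<times> b1" "b1 \<in> sets E" by auto
    then show ?case by (intro exI[of _ "{b1}"]) auto
  next
    case Empty
    then show ?case by (intro exI[of _ "{}"]) auto
  next
    case (Compl a)
    then obtain K where K: "countable K" "K \<subseteq> sets E"
      "\<forall>t t'. (\<forall>k\<in>K. t \<in> k \<longleftrightarrow> t' \<in> k) \<longrightarrow> (\<forall>s. (s, t) \<in> a \<longleftrightarrow> (s, t') \<in> a)"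
      by blast
    show ?case
    proof (intro exI conjI allI impI)
      show "countable (insert (space E) K)" "insert (space E) K \<subseteq> sets E"
        using K by auto
      fix t t' s assume "\<forall>k\<in>insert (space E) K. t \<in> k \<longleftrightarrow> t' \<in> k"
      then have "t \<in> space E \<longleftrightarrow> t' \<in> space E" "(s, t) \<in> a \<longleftrightarrow> (s, t') \<in> a"
        using K(3) by blast+
      then show "(s, t) \<in> space P \<times> space E - a \<longleftrightarrow> (s, t') \<in> space P \<times> space E - a"
        by simp
    qed
  next
    case (Union a)
    then have "\<forall>i. \<exists>K. countable K \<and> K \<subseteq> sets E \<and>
      (\<forall>t t'. (\<forall>k\<in>K. t \<in> k \<longleftrightarrow> t' \<in> k) \<longrightarrow> (\<forall>s. (s, t) \<in> a i \<longleftrightarrow> (s, t') \<in> a i))"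
      by blast
    then obtain K where K: "\<And>i. countable (K i) \<and> K i \<subseteq> sets E \<and>
      (\<forall>t t'. (\<forall>k\<in>K i. t \<in> k \<longleftrightarrow> t' \<in> k) \<longrightarrow> (\<forall>s. (s, t) \<in> a i \<longleftrightarrow> (s, t') \<in> a i))"
      by metis
    show ?case
    proof (intro exI conjI allI impI)
      show "countable (\<Union>i. K i)" "(\<Union>i. K i) \<subseteq> sets E"
        using K by auto
    next
      fix t t' s assume "\<forall>k\<in>\<Union>i. K i. t \<in> k \<longleftrightarrow> t' \<in> k"
      then have "(s, t) \<in> a i \<longleftrightarrow> (s, t') \<in> a i" for i
        using K[of i] by blast
      then show "(s, t) \<in> (\<Union>i. a i) \<longleftrightarrow> (s, t') \<in> (\<Union>i. a i)"
        by blast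
    qed
  qed
  then show thesis using that by blast
qed

lemma countable_cocountable_sets_not_separating:
  assumes "uncountable U" "countable K"
    and "\<And>k. k \<in> K \<Longrightarrow> countable k \<or> countable (U - k)"
  obtains t t' where "t \<in> U" "t' \<in> U" "t \<noteq> t'" "\<forall>k\<in>K. t \<in> k \<longleftrightarrow> t' \<in> k"
proof -
  define N where "N = (\<Union>k\<in>K. if countable k then k else U - k)"
  have "countable N"
    unfolding N_def using assms(2,3) by (intro countable_UN) auto
  then have "uncountable (U - N - {t})" for t
    using \<open>uncountable U\<close> by (simp add: uncountable_minus_countable)
  then obtain t t' where "t \<in> U - N" "t' \<in> U - N - {t}"
    by (metis Diff_iff countable_empty empty_iff ex_in_conv)
  moreover have "t \<in> k \<longleftrightarrow> t' \<in> k" if "k \<in> K" for k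
    using calculation that unfolding N_def by (cases "countable k") auto
  ultimately show thesis using that by blast
qed

lemma diagonal_notin_pair_measure_countable_cocountable:
  assumes "uncountable U" "\<And>e. e \<in> sets E \<Longrightarrow> countable e \<or> countable (U - e)"
  shows "{(s, t) \<in> U \<times> U. s = t} \<notin> sets (A \<Otimes>\<^sub>M E)"
proof
  define Diag where "Diag = {(s, t) \<in> U \<times> U. s = t}"
  assume "{(s, t) \<in> U \<times> U. s = t} \<in> sets (A \<Otimes>\<^sub>M E)"
  then obtain K where "countable K" "K \<subseteq> sets E" and K_determines:
    "\<forall>t t'. (\<forall>k\<in>K. t \<in> k \<longleftrightarrow> t' \<in> k) \<longrightarrow> (\<forall>s. (s, t) \<in> Diag \<longleftrightarrow> (s, t') \<in> Diag)"
    unfolding Diag_def by (rule sets_pair_measure_countably_determined_snd)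
  have "\<And>k. k \<in> K \<Longrightarrow> countable k \<or> countable (U - k)"
    using \<open>K \<subseteq> sets E\<close> assms(2) by blast
  then obtain t t' where "t \<in> U" "t' \<in> U" "t \<noteq> t'" "\<forall>k\<in>K. t \<in> k \<longleftrightarrow> t' \<in> k"
    using countable_cocountable_sets_not_separating[OF \<open>uncountable U\<close> \<open>countable K\<close>] by blast
  then have "(t, t) \<in> Diag \<longleftrightarrow> (t, t') \<in> Diag"
    using K_determines by blast
  then show False
    using \<open>t \<in> U\<close> \<open>t \<noteq> t'\<close> unfolding Diag_def by simp
qed

lemma diagonal_in_pair_measure:
  fixes g :: "'a \<Rightarrow> 'b::{second_countable_topology, linorder_topology}"
  assumes [measurable]: "g \<in> borel_measurable A" "g \<in> borel_measurable B"
    and "inj g"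
  shows "{(s, t) \<in> space A \<times> space B. s = t} \<in> sets (A \<Otimes>\<^sub>M B)"
proof -
  have "{w \<in> space (A \<Otimes>\<^sub>M B). g (fst w) = g (snd w)} \<in> sets (A \<Otimes>\<^sub>M B)"
    by measurable
  also have "{w \<in> space (A \<Otimes>\<^sub>M B). g (fst w) = g (snd w)} = {(s, t) \<in> space A \<times> space B. s = t}"
    using \<open>inj g\<close> by (auto simp: space_pair_measure inj_eq)
  finally show ?thesis .
qed

lemma sets_snd_subset_if_pair_measure_subset:
  assumes "sets (A \<Otimes>\<^sub>M E) \<subseteq> sets (P \<Otimes>\<^sub>M Q)" "space A \<noteq> {}"
  shows "sets E \<subseteq> sets Q"
proof
  fix e assume "e \<in> sets E"
  obtain a where "a \<in> space A" using \<open>space A \<noteq> {}\<close> by blast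
  have "space A \<times> e \<in> sets (P \<Otimes>\<^sub>M Q)"
    using assms(1) pair_measureI[OF sets.top \<open>e \<in> sets E\<close>] by blast
  moreover have "Pair a -` (space A \<times> e) = e" using \<open>a \<in> space A\<close> by auto
  ultimately show "e \<in> sets Q" using sets_Pair1 by metis
qed

lemma involution_sets_countable_or_cocountable:
  assumes involution: "\<And>t. g (g t) = t"
    and invariant: "\<And>V. V \<in> sets N \<Longrightarrow> V \<subseteq> U \<Longrightarrow> g -` V = V \<Longrightarrow> countable V \<or> countable (U - V)"
    and fixed_points: "uncountable {t \<in> U. g t = t}"
    and "e \<in> sets N" "g -` e \<in> sets N" "e \<subseteq> U" "g -` e \<subseteq> U"
  shows "countable e \<or> countable (U - e)"
proof -
  have "g -` g -` e = e" using involution by auto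
  then have "g -` (e \<union> g -` e) = e \<union> g -` e" "g -` (e \<inter> g -` e) = e \<inter> g -` e"
    by auto
  then have union: "countable (e \<union> g -` e) \<or> countable (U - (e \<union> g -` e))"
    and inter: "countable (e \<inter> g -` e) \<or> countable (U - (e \<inter> g -` e))"
    using assms(4-7) by (intro invariant; auto)+
  have "{t \<in> U. g t = t} \<subseteq> (U - (e \<union> g -` e)) \<union> (e \<inter> g -` e)"
    by auto
  then have "\<not> (countable (U - (e \<union> g -` e)) \<and> countable (e \<inter> g -` e))"
    using fixed_points by (meson countable_Un countable_subset)
  then have "countable (e \<union> g -` e) \<or> countable (U - (e \<inter> g -` e))"
    using union inter by blast
  moreover have "e \<subseteq> e \<union> g -` e" "U - e \<subseteq> U - (e \<inter> g -` e)"
    by auto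
  ultimately show ?thesis
    by (meson countable_subset)
qed

lemma sets_unit_borel: "e \<in> sets unit_borel \<longleftrightarrow> e \<subseteq> {0..1} \<and> e \<in> sets borel"
  unfolding unit_borel_def by (subst sets_restrict_space_iff) auto

lemma space_unit_borel [simp]: "space unit_borel = {0..1}"
  by (simp add: unit_borel_def)

lemma space_join_unit [simp]: "space (join_unit F G) = {0..1}"
  by (simp add: join_unit_def space_measure_of_conv)

lemma sets_join_unit_upper:
  assumes "space F = {0..1}" "space G = {0..1}"
  shows "sets F \<subseteq> sets (join_unit F G)" "sets G \<subseteq> sets (join_unit F G)"
proof -
  have "sets F \<union> sets G \<subseteq> Pow {0..1}"
    using sets.space_closed[of F] sets.space_closed[of G] assms by auto
  then have "sets (join_unit F G) = sigma_sets {0..1} (sets F \<union> sets G)"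
    by (simp add: join_unit_def sets_measure_of)
  then show "sets F \<subseteq> sets (join_unit F G)" "sets G \<subseteq> sets (join_unit F G)"
    by auto
qed

lemma measurable_join_unit1:
  assumes "g \<in> F \<rightarrow>\<^sub>M N" "space F = {0..1}" "space G = {0..1}"
  shows "g \<in> join_unit F G \<rightarrow>\<^sub>M N"
  using assms measurable_mono[of N N F "join_unit F G"] sets_join_unit_upper by auto

lemma measurable_join_unit2:
  assumes "g \<in> G \<rightarrow>\<^sub>M N" "space F = {0..1}" "space G = {0..1}"
  shows "g \<in> join_unit F G \<rightarrow>\<^sub>M N"
  using assms measurable_mono[of N N G "join_unit F G"] sets_join_unit_upper by auto

lemma uncountable_big_borel_sets: "uncountable big_borel_sets"
proof
  assume "countable big_borel_sets"
  have "{0..r} \<in> big_borel_sets" if "r \<in> {0<..<1}" for r :: real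
  proof -
    have "{0..1} - {0..r} = {r<..1}"
      using that by auto
    then show ?thesis
      using that
      by (simp add: big_borel_sets_def uncountable_closed_interval uncountable_half_open_interval_2)
  qed
  then have "countable ((\<lambda>r. {0..r}) ` {0<..<1::real})"
    using \<open>countable big_borel_sets\<close> by (meson countable_subset image_subsetI)
  moreover have "inj_on (\<lambda>r::real. {0..r}) {0<..<1}"
  proof (rule inj_onI)
    fix r s :: real assume "r \<in> {0<..<1}" "{0..r} = {0..s}"
    then have "r \<in> {0..s}" "s \<in> {0..r}" by auto
    then show "r = s" by simp
  qed
  ultimately show False
    using countable_image_inj_on uncountable_open_interval[of 0 "1::real"] by auto
qed

context
  fixes I :: "'i set" and M :: "'i \<Rightarrow> real set" and x y z :: "'i \<Rightarrow> real"
    and f :: "real \<Rightarrow> real"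
  assumes f: "constructed_f I M x y z f"
begin

lemma constructed_f_enumeration: "bij_betw M I big_borel_sets"
  using f unfolding constructed_f_def by blast

lemma constructed_f_swaps: "i \<in> I \<Longrightarrow> f (x i) = z i" "i \<in> I \<Longrightarrow> f (z i) = x i"
  using f unfolding constructed_f_def by blast+

lemma constructed_f_fixes: "t \<notin> x ` I \<union> z ` I \<Longrightarrow> f t = t"
  using f unfolding constructed_f_def by blast

lemma constructed_f_mem:
  assumes "i \<in> I"
  shows "x i \<in> M i" "y i \<in> M i" "z i \<in> {0..1} - M i"
  using f assms unfolding constructed_f_def by blast+

lemma constructed_f_distinct: "i \<in> I \<Longrightarrow> x i \<noteq> y i" "i \<in> I \<Longrightarrow> y i \<noteq> z i"
  using f unfolding constructed_f_def by blast+

lemma constructed_f_disjoint: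
  "i \<in> I \<Longrightarrow> j \<in> I \<Longrightarrow> i \<noteq> j \<Longrightarrow> {x i, y i, z i} \<inter> {x j, y j, z j} = {}"
  using f unfolding constructed_f_def by blast

lemma constructed_f_sets_in_unit_interval: "i \<in> I \<Longrightarrow> M i \<subseteq> {0..1}"
  using bij_betw_apply[OF constructed_f_enumeration] unfolding big_borel_sets_def by blast

lemma constructed_f_fixes_y: "i \<in> I \<Longrightarrow> f (y i) = y i"
proof (rule constructed_f_fixes)
  assume "i \<in> I"
  have "y i \<noteq> x j \<and> y i \<noteq> z j" if "j \<in> I" for j
  proof (cases "i = j")
    case True
    then show ?thesis using constructed_f_distinct \<open>i \<in> I\<close> by metis
  next
    case False
    then show ?thesis using constructed_f_disjoint \<open>i \<in> I\<close> \<open>j \<in> I\<close> by blast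
  qed
  then show "y i \<notin> x ` I \<union> z ` I" by blast
qed

lemma constructed_f_inj_y: "inj_on y I"
proof (rule inj_onI)
  fix i j assume "i \<in> I" "j \<in> I" "y i = y j"
  then have "i \<noteq> j \<Longrightarrow> {x i, y i, z i} \<inter> {x j, y j, z j} \<noteq> {}" by blast
  then show "i = j"
    using constructed_f_disjoint \<open>i \<in> I\<close> \<open>j \<in> I\<close> by blast
qed

lemma constructed_f_involution: "f (f t) = t"
proof (cases "t \<in> x ` I \<union> z ` I")
  case True
  then obtain i where "i \<in> I" "t = x i \<or> t = z i" by blast
  then show ?thesis using constructed_f_swaps by auto
next
  case False
  then show ?thesis using constructed_f_fixes by simp
qed

lemma constructed_f_unit_interval: "f \<in> {0..1} \<rightarrow> {0..1}"
proof
  fix t :: real assume "t \<in> {0..1}"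
  show "f t \<in> {0..1}"
  proof (cases "t \<in> x ` I \<union> z ` I")
    case True
    then obtain i where "i \<in> I" "t = x i \<or> t = z i" by blast
    moreover have "x i \<in> {0..1}" "z i \<in> {0..1}"
      using constructed_f_mem[OF \<open>i \<in> I\<close>] constructed_f_sets_in_unit_interval[OF \<open>i \<in> I\<close>] by auto
    ultimately show ?thesis using constructed_f_swaps by auto
  next
    case False
    then show ?thesis using constructed_f_fixes \<open>t \<in> {0..1}\<close> by simp
  qed
qed

lemma constructed_f_invariant_countable_or_cocountable:
  fixes V :: "real set"
  assumes "V \<in> sets borel" "V \<subseteq> {0..1}" "f -` V = V"
  shows "countable V \<or> countable ({0..1} - V)"
proof (rule ccontr)
  assume "\<not> (countable V \<or> countable ({0..1} - V))"
  then have "V \<in> M ` I"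
    using assms(1,2) constructed_f_enumeration
    unfolding big_borel_sets_def bij_betw_def by blast
  then obtain i where "i \<in> I" "V = M i" by blast
  then have "x i \<in> V" "f (x i) \<notin> V"
    using constructed_f_mem constructed_f_swaps by auto
  then show False
    using \<open>f -` V = V\<close> by blast
qed

lemma constructed_f_uncountable_fixed_points: "uncountable {t \<in> {0..1}. f t = t}"
proof
  assume "countable {t \<in> {0..1}. f t = t}"
  moreover have "y ` I \<subseteq> {t \<in> {0..1}. f t = t}"
    using constructed_f_fixes_y constructed_f_mem(2) constructed_f_sets_in_unit_interval by blast
  ultimately have "countable I"
    using constructed_f_inj_y countable_image_inj_on countable_subset by blast
  then have "countable big_borel_sets"
    using constructed_f_enumeration by (metis bij_betw_imp_surj_on countable_image)
  then show False
    using uncountable_big_borel_sets by blast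
qed

lemma constructed_f_vimage_borel_sets_countable_or_cocountable:
  assumes "e \<in> sets unit_borel" "e \<in> sets (vimage_algebra {0..1} f unit_borel)"
  shows "countable e \<or> countable ({0..1} - e)"
proof (rule involution_sets_countable_or_cocountable)
  obtain B where B: "B \<in> sets unit_borel" "e = f -` B \<inter> {0..1}"
    using assms(2) constructed_f_unit_interval by (auto simp: sets_vimage_algebra2)
  have "f -` {0..1} = {0..1}"
    using constructed_f_unit_interval constructed_f_involution
    by (metis Pi_iff subsetI subset_antisym vimageI2 vimage_eq)
  then have "f -` e = B"
    using B constructed_f_involution sets_unit_borel by auto
  then show "f -` e \<in> sets borel" "f -` e \<subseteq> {0..1}"
    using B(1) sets_unit_borel by auto
  show "e \<in> sets borel" "e \<subseteq> {0..1}"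
    using assms(1) sets_unit_borel by auto
qed (use constructed_f_involution constructed_f_invariant_countable_or_cocountable
      constructed_f_uncountable_fixed_points in auto)

end

theorem corollary2p5:
  fixes I :: "'i set" and M :: "'i \<Rightarrow> real set" and x y z :: "'i \<Rightarrow> real"
    and f :: "real \<Rightarrow> real"
  assumes "constructed_f I M x y z f"
  defines "\<D> \<equiv> vimage_algebra {0..1} f unit_borel"
  shows "\<not> (\<exists>A0 E :: real measure. space A0 = {0..1} \<and> space E = {0..1} \<and>
           sets (A0 \<Otimes>\<^sub>M E) =
             sets (join_unit \<D> unit_borel \<Otimes>\<^sub>M unit_borel) \<inter>
             sets (join_unit \<D> unit_borel \<Otimes>\<^sub>M \<D>))"
proof
  assume "\<exists>A0 E :: real measure. space A0 = {0..1} \<and> space E = {0..1} \<and>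
           sets (A0 \<Otimes>\<^sub>M E) =
             sets (join_unit \<D> unit_borel \<Otimes>\<^sub>M unit_borel) \<inter>
             sets (join_unit \<D> unit_borel \<Otimes>\<^sub>M \<D>)"
  then obtain A0 E :: "real measure" where "space A0 = {0..1}" and product:
    "sets (A0 \<Otimes>\<^sub>M E) = sets (join_unit \<D> unit_borel \<Otimes>\<^sub>M unit_borel) \<inter>
       sets (join_unit \<D> unit_borel \<Otimes>\<^sub>M \<D>)"
    by blast
  have space_\<D>: "space \<D> = {0..1}"
    by (simp add: \<D>_def)
  have ident: "(\<lambda>t. t) \<in> borel_measurable unit_borel"
    unfolding unit_borel_def by (rule measurable_restrict_space1) simp
  have "f \<in> \<D> \<rightarrow>\<^sub>M unit_borel"
    unfolding \<D>_def using constructed_f_unit_interval[OF assms(1)]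
    by (intro measurable_vimage_algebra1) simp
  then have f_borel: "f \<in> borel_measurable \<D>"
    using measurable_comp[OF _ ident] by (simp add: comp_def)
  have "inj f"
    using constructed_f_involution[OF assms(1)] by (rule inj_on_inverseI)
  have "{(s, t) \<in> {0..1} \<times> {0..1}. s = t} \<in> sets (join_unit \<D> unit_borel \<Otimes>\<^sub>M unit_borel)"
    using diagonal_in_pair_measure[OF measurable_join_unit2[OF ident space_\<D>] ident inj_on_id2]
    by simp
  moreover have "{(s, t) \<in> {0..1} \<times> {0..1}. s = t} \<in> sets (join_unit \<D> unit_borel \<Otimes>\<^sub>M \<D>)"
    using diagonal_in_pair_measure[OF measurable_join_unit1[OF f_borel space_\<D>] f_borel \<open>inj f\<close>]
    by (simp add: space_\<D>)
  ultimately have "{(s, t) \<in> {0..1} \<times> {0..1}. s = t} \<in> sets (A0 \<Otimes>\<^sub>M E)"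
    using product by blast
  moreover have "sets E \<subseteq> sets unit_borel" "sets E \<subseteq> sets \<D>"
    using product \<open>space A0 = {0..1}\<close>
    by (intro sets_snd_subset_if_pair_measure_subset[of A0 E "join_unit \<D> unit_borel"]; simp)+
  then have "{(s, t) \<in> {0..1} \<times> {0..1}. s = t} \<notin> sets (A0 \<Otimes>\<^sub>M E)"
    using constructed_f_vimage_borel_sets_countable_or_cocountable[OF assms(1), folded \<D>_def]
    by (intro diagonal_notin_pair_measure_countable_cocountable) (auto simp: uncountable_closed_interval)
  ultimately show False
    by contradiction
qed

end
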